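(* Let $\Gamma$ be a metrized graph with $v$ vertices, and let $p\in V(\Gamma)$. Then $$2(v-2)Kf(\Gamma)=2\sum_{e_i \in E(\Gamma)} \frac{R_i}{L_i+R_i} Kf(\overline{\Gamma}_i) + 2v \sum_{e_i \in E(\Gamma)} \frac{L_i R_{a_i,p} R_{b_i,p}}{(L_i+R_i)^2}-v \sum_{e_i \in E(\Gamma)} \frac{L_i R_i^2}{(L_i+R_i)^2} + \sum_{w \in V(\Gamma)}\sum_{e_i \in E(\Gamma)} \frac{R_i}{L_i+R_i} \big(r(p_i,w)+r(q_i,w)\big),$$ where $p_i,q_i$ denote the end points of $e_i$.
   Context: A metrized graph $\Gamma$ is a finite connected graph (multiple edges and self-loops allowed) each of whose edges is identified with a closed segment of positive length, with a finite nonempty vertex set $V(\Gamma)$ containing every point of valence $\neq2$; $v=\#V(\Gamma)$, $E(\Gamma)$ its edge set, $L_i$ the length of $e_i$, $r$ the effective resistance (edges as resistors of resistance equal to length). $Kf(\Gamma)=\frac12\sum_{p,q\in V(\Gamma)}r(p,q)$. For an edge $e_i$ with end points $p_i,q_i$: if $\Gamma-e_i$ (interior deleted) is connected, $R_i$ is the effective resistance between $p_i,q_i$ in $\Gamma-e_i$, $R_{a_i,p}=\hat j_{p_i}(p,q_i)$, $R_{b_i,p}=\hat j_{q_i}(p,p_i)$ with $\hat j_z(x,y)$ the voltage function of $\Gamma-e_i$ (potential at $x$ when unit current enters at $y$ and exits at $z$, potential $0$ at $z$); if $e_i$ is a bridge, $R_{a_i,p}=0,R_{b_i,p}=R_i$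 for $p$ in the component of $\Gamma-e_i$ containing $p_i$ and $R_{a_i,p}=R_i,R_{b_i,p}=0$ otherwise, with every expression in $R_i$ interpreted as its limit as $R_i\to\infty$; for a self-loop $R_i=0$. $\overline\Gamma_i$ is obtained by contracting $e_i$ to a point, with vertex set the image of $V(\Gamma)$. *)

theory Defs
  imports Complex_Main
begin

text \<open>A metrized graph is encoded by its (finite) vertex set V, a finite set of edge names E,
  the end points of each edge (ends e = (p_e, q_e); a self-loop has p_e = q_e) and the
  edge lengths Len e > 0.  Since V contains every point of valence different from 2,
  the effective resistance between vertices is that of the resistor network with the
  edges as resistors of resistance Len e.\<close>

definition adj :: "'e set \<Rightarrow> ('e \<Rightarrow> 'v \<times> 'v) \<Rightarrow> ('v \<times> 'v) set" where
  "adj E ends = {(x, y). \<exists>e\<in>E. ends e = (x, y) \<or> ends e = (y, x)}"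

definition graph_connected :: "'v set \<Rightarrow> 'e set \<Rightarrow> ('e \<Rightarrow> 'v \<times> 'v) \<Rightarrow> bool" where
  "graph_connected V E ends \<longleftrightarrow> (\<forall>x\<in>V. \<forall>y\<in>V. (x, y) \<in> (adj E ends)\<^sup>*)"

definition metrized_graph :: "'v set \<Rightarrow> 'e set \<Rightarrow> ('e \<Rightarrow> 'v \<times> 'v) \<Rightarrow> ('e \<Rightarrow> real) \<Rightarrow> bool" where
  "metrized_graph V E ends Len \<longleftrightarrow> finite V \<and> V \<noteq> {} \<and> finite E \<and>
     (\<forall>e\<in>E. fst (ends e) \<in> V \<and> snd (ends e) \<in> V \<and> Len e > 0) \<and>
     graph_connected V E ends"

text \<open>f is the voltage (potential) when unit current enters at y and exits at z,
  with potential 0 at z (Kirchhoff's current law at each vertex).\<close>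
definition is_voltage :: "'v set \<Rightarrow> 'e set \<Rightarrow> ('e \<Rightarrow> 'v \<times> 'v) \<Rightarrow> ('e \<Rightarrow> real)
    \<Rightarrow> 'v \<Rightarrow> 'v \<Rightarrow> ('v \<Rightarrow> real) \<Rightarrow> bool" where
  "is_voltage V E ends Len z y f \<longleftrightarrow> f z = 0 \<and>
     (\<forall>x\<in>V. (\<Sum>e\<in>E. (if fst (ends e) = x then (f x - f (snd (ends e))) / Len e else 0)
                     + (if snd (ends e) = x then (f x - f (fst (ends e))) / Len e else 0))
            = (if x = y then 1 else 0) - (if x = z then 1 else 0))"

definition jvolt :: "'v set \<Rightarrow> 'e set \<Rightarrow> ('e \<Rightarrow> 'v \<times> 'v) \<Rightarrow> ('e \<Rightarrow> real)
    \<Rightarrow> 'v \<Rightarrow> 'v \<Rightarrow> 'v \<Rightarrow> real" where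
  "jvolt V E ends Len z x y = (THE c. \<exists>f. is_voltage V E ends Len z y f \<and> f x = c)"

definition eff_res :: "'v set \<Rightarrow> 'e set \<Rightarrow> ('e \<Rightarrow> 'v \<times> 'v) \<Rightarrow> ('e \<Rightarrow> real)
    \<Rightarrow> 'v \<Rightarrow> 'v \<Rightarrow> real" where
  "eff_res V E ends Len x y = jvolt V E ends Len y x x"

definition Kf :: "'v set \<Rightarrow> 'e set \<Rightarrow> ('e \<Rightarrow> 'v \<times> 'v) \<Rightarrow> ('e \<Rightarrow> real) \<Rightarrow> real" where
  "Kf V E ends Len = (1/2) * (\<Sum>p\<in>V. \<Sum>q\<in>V. eff_res V E ends Len p q)"

definition contr_map :: "('e \<Rightarrow> 'v \<times> 'v) \<Rightarrow> 'e \<Rightarrow> 'v \<Rightarrow> 'v" where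
  "contr_map ends e x = (if x = snd (ends e) then fst (ends e) else x)"

definition Kf_contract :: "'v set \<Rightarrow> 'e set \<Rightarrow> ('e \<Rightarrow> 'v \<times> 'v) \<Rightarrow> ('e \<Rightarrow> real) \<Rightarrow> 'e \<Rightarrow> real" where
  "Kf_contract V E ends Len e =
     Kf (contr_map ends e ` V) (E - {e}) (map_prod (contr_map ends e) (contr_map ends e) \<circ> ends) Len"

definition is_bridge :: "'v set \<Rightarrow> 'e set \<Rightarrow> ('e \<Rightarrow> 'v \<times> 'v) \<Rightarrow> 'e \<Rightarrow> bool" where
  "is_bridge V E ends e \<longleftrightarrow> \<not> graph_connected V (E - {e}) ends"

definition R_edge :: "'v set \<Rightarrow> 'e set \<Rightarrow> ('e \<Rightarrow> 'v \<times> 'v) \<Rightarrow> ('e \<Rightarrow> real) \<Rightarrow> 'e \<Rightarrow> real" where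
  "R_edge V E ends Len e = eff_res V (E - {e}) ends Len (fst (ends e)) (snd (ends e))"

text \<open>For a
  bridge, R_{a_e,p}, R_{b_e,p} are 0 or R_e according to the component of p in \<Gamma> - e,
  and the expression is interpreted as its limit as R_e \<rightarrow> \<infinity>.\<close>
definition edge_val :: "'v set \<Rightarrow> 'e set \<Rightarrow> ('e \<Rightarrow> 'v \<times> 'v) \<Rightarrow> ('e \<Rightarrow> real) \<Rightarrow> 'v \<Rightarrow> 'e
    \<Rightarrow> (real \<Rightarrow> real \<Rightarrow> real \<Rightarrow> real) \<Rightarrow> real" where
  "edge_val V E ends Len p e F =
     (if is_bridge V E ends e then
        (let inA = ((fst (ends e), p) \<in> (adj (E - {e}) ends)\<^sup>*) in
         Lim at_top (\<lambda>R. F R (if inA then 0 else R) (if inA then R else 0)))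
      else
        F (R_edge V E ends Len e)
          (jvolt V (E - {e}) ends Len (fst (ends e)) p (snd (ends e)))
          (jvolt V (E - {e}) ends Len (snd (ends e)) p (fst (ends e))))"

end

theory Submission
  imports Defs "HOL-Library.Function_Algebras"
begin

text \<open>Ground the network at p and, for an edge e with ends a, b, let \<open>pot e\<close> be the potential of
  a unit current from a to b in \<Gamma> itself (grounded at b), and \<open>rho e = pot e a = r(a, b)\<close>.
  Deleting a non-bridge e merely rescales \<open>pot e\<close> by \<open>L/(L - rho e)\<close>, and for a bridge
  \<open>pot e\<close> only takes the values 0 and L; so every coefficient in the identity is a rational
  function of L, \<open>rho e\<close> and \<open>pot e p\<close> (e.g. \<open>R/(L + R) = rho e / L\<close>).  Contracting e changes the
  resistances to \<open>r(x, y) - (pot e x - pot e y)\<^sup>2 / rho e\<close>.  After these substitutions both sides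
  are sums over the edges, and they agree by three global facts: Foster's theorem
  \<open>\<Sum>e. rho e / L = v - 1\<close>, Thomson's principle \<open>r(x, y) = \<Sum>e. (pot e x - pot e y)\<^sup>2 / L\<close>,
  and the reciprocity \<open>\<Sum>e. (pot e y - pot e p) (pot e y + pot e p - rho e) / L = 0\<close>, which is
  Green's identity for the potential of the unit current from y to p.\<close>

section \<open>The Laplacian of a resistor network\<close>

definition resistor_network :: "'v set \<Rightarrow> 'e set \<Rightarrow> ('e \<Rightarrow> 'v \<times> 'v) \<Rightarrow> ('e \<Rightarrow> real) \<Rightarrow> bool" where
  "resistor_network V E ends Len \<longleftrightarrow>
     finite V \<and> finite E \<and> (\<forall>e\<in>E. fst (ends e) \<in> V \<and> snd (ends e) \<in> V \<and> Len e > 0)"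

definition edge_current :: "('e \<Rightarrow> 'v \<times> 'v) \<Rightarrow> ('e \<Rightarrow> real) \<Rightarrow> ('v \<Rightarrow> real) \<Rightarrow> 'v \<Rightarrow> 'e \<Rightarrow> real" where
  "edge_current ends Len f x e =
     (if fst (ends e) = x then (f x - f (snd (ends e))) / Len e else 0)
   + (if snd (ends e) = x then (f x - f (fst (ends e))) / Len e else 0)"

definition laplacian :: "'e set \<Rightarrow> ('e \<Rightarrow> 'v \<times> 'v) \<Rightarrow> ('e \<Rightarrow> real) \<Rightarrow> ('v \<Rightarrow> real) \<Rightarrow> 'v \<Rightarrow> real" where
  "laplacian E ends Len f x = (\<Sum>e\<in>E. edge_current ends Len f x e)"

lemma is_voltage_iff_laplacian:
  "is_voltage V E ends Len z y f \<longleftrightarrow> f z = 0 \<and>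
     (\<forall>x\<in>V. laplacian E ends Len f x = (if x = y then 1 else 0) - (if x = z then 1 else 0))"
  by (simp add: is_voltage_def laplacian_def edge_current_def)

lemma laplacian_add:
  "laplacian E ends Len (\<lambda>w. f w + g w) x = laplacian E ends Len f x + laplacian E ends Len g x"
  unfolding laplacian_def sum.distrib[symmetric]
  by (rule sum.cong) (auto simp: edge_current_def divide_inverse algebra_simps)

lemma laplacian_diff:
  "laplacian E ends Len (\<lambda>w. f w - g w) x = laplacian E ends Len f x - laplacian E ends Len g x"
  unfolding laplacian_def sum_subtractf[symmetric]
  by (rule sum.cong) (auto simp: edge_current_def divide_inverse algebra_simps)

lemma laplacian_cmult:
  "laplacian E ends Len (\<lambda>w. c * f w) x = c * laplacian E ends Len f x"
  unfolding laplacian_def sum_distrib_left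
  by (rule sum.cong) (auto simp: edge_current_def algebra_simps)

lemma laplacian_add_const: "laplacian E ends Len (\<lambda>w. f w + k) x = laplacian E ends Len f x"
  unfolding laplacian_def by (rule sum.cong) (auto simp: edge_current_def)

lemma laplacian_remove_edge:
  "finite E \<Longrightarrow> e \<in> E \<Longrightarrow>
     laplacian E ends Len f x = edge_current ends Len f x e + laplacian (E - {e}) ends Len f x"
  by (simp add: laplacian_def sum.remove)

lemma laplacian_eq_0_if_edges_const:
  "\<forall>e\<in>E. f (fst (ends e)) = f (snd (ends e)) \<Longrightarrow> laplacian E ends Len f x = 0"
  unfolding laplacian_def by (rule sum.neutral) (auto simp: edge_current_def)

lemma laplacian_cong:
  "resistor_network V E ends Len \<Longrightarrow> (\<And>w. w \<in> V \<Longrightarrow> f w = g w) \<Longrightarrow> x \<in> V \<Longrightarrow>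
     laplacian E ends Len f x = laplacian E ends Len g x"
  unfolding laplacian_def resistor_network_def by (rule sum.cong) (auto simp: edge_current_def)

lemma sum_mult_laplacian:
  assumes "resistor_network V E ends Len"
  shows "(\<Sum>x\<in>V. g x * laplacian E ends Len f x) =
     (\<Sum>e\<in>E. (f (fst (ends e)) - f (snd (ends e))) * (g (fst (ends e)) - g (snd (ends e))) / Len e)"
proof -
  have "(\<Sum>x\<in>V. g x * laplacian E ends Len f x) = (\<Sum>e\<in>E. \<Sum>x\<in>V. g x * edge_current ends Len f x e)"
    unfolding laplacian_def sum_distrib_left by (rule sum.swap)
  also have "\<dots> = (\<Sum>e\<in>E. (f (fst (ends e)) - f (snd (ends e))) * (g (fst (ends e)) - g (snd (ends e))) / Len e)"
  proof (rule sum.cong[OF refl])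
    fix e assume "e \<in> E"
    then have "fst (ends e) \<in> V" "snd (ends e) \<in> V" "finite V"
      using assms by (auto simp: resistor_network_def)
    then have "(\<Sum>x\<in>V. g x * edge_current ends Len f x e) =
        g (fst (ends e)) * ((f (fst (ends e)) - f (snd (ends e))) / Len e)
      + g (snd (ends e)) * ((f (snd (ends e)) - f (fst (ends e))) / Len e)"
      by (simp add: edge_current_def distrib_left sum.distrib if_distrib[of "(*) (g _)"] cong: if_cong)
    then show "(\<Sum>x\<in>V. g x * edge_current ends Len f x e) =
        (f (fst (ends e)) - f (snd (ends e))) * (g (fst (ends e)) - g (snd (ends e))) / Len e"
      by (simp add: divide_inverse algebra_simps)
  qed
  finally show ?thesis .
qed

lemma sum_laplacian_eq_0:
  "resistor_network V E ends Len \<Longrightarrow> (\<Sum>x\<in>V. laplacian E ends Len f x) = 0"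
  using sum_mult_laplacian[of V E ends Len "\<lambda>_. 1" f] by simp

lemma edges_const_if_laplacian_eq_0:
  assumes N: "resistor_network V E ends Len" and harm: "\<forall>x\<in>V. laplacian E ends Len f x = 0"
  shows "\<forall>e\<in>E. f (fst (ends e)) = f (snd (ends e))"
proof -
  have nonneg: "\<forall>e\<in>E. (f (fst (ends e)) - f (snd (ends e)))\<^sup>2 / Len e \<ge> 0"
    using N by (auto simp: resistor_network_def)
  have "(\<Sum>e\<in>E. (f (fst (ends e)) - f (snd (ends e)))\<^sup>2 / Len e) = 0"
    using sum_mult_laplacian[OF N, of f f] harm by (simp add: power2_eq_square)
  then have "\<forall>e\<in>E. (f (fst (ends e)) - f (snd (ends e)))\<^sup>2 / Len e = 0"
    using N nonneg unfolding resistor_network_def by (subst (asm) sum_nonneg_eq_0_iff) auto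
  then show ?thesis using N unfolding resistor_network_def by force
qed

lemma rtrancl_adj_eq_if_edges_const:
  assumes "\<forall>e\<in>E. f (fst (ends e)) = f (snd (ends e))" and "(x, y) \<in> (adj E ends)\<^sup>*"
  shows "f x = f y"
  using assms(2) by induction (use assms(1) in \<open>auto simp: adj_def\<close>)

lemma harmonic_imp_const:
  assumes "resistor_network V E ends Len" "graph_connected V E ends"
    and "\<forall>x\<in>V. laplacian E ends Len f x = 0" "x \<in> V" "y \<in> V"
  shows "f x = f y"
  using rtrancl_adj_eq_if_edges_const[OF edges_const_if_laplacian_eq_0[OF assms(1,3)]] assms(2,4,5)
  by (auto simp: graph_connected_def)

section \<open>Existence and uniqueness of voltages\<close>

definition point_indicator :: "'v \<Rightarrow> 'v \<Rightarrow> real" where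
  "point_indicator x w = (if w = x then 1 else 0)"

lemma sum_fun_apply: "finite A \<Longrightarrow> (\<Sum>i\<in>A. (f i :: 'v \<Rightarrow> 'a::comm_monoid_add)) w = (\<Sum>i\<in>A. f i w)"
  by (induction A rule: finite_induct) (auto simp: plus_fun_def)

lemma sum_mult_delta [simp]:
  "finite A \<Longrightarrow> (\<Sum>w\<in>A. f w * (if w = x then 1 else 0)) = (if x \<in> A then f x else (0::'a::semiring_1))"
  by (simp add: if_distrib[of "(*) (f _)"] cong: if_cong)

context
begin

interpretation fun_vs: vector_space "\<lambda>(c::real) (f::'v \<Rightarrow> real) x. c * f x"
  by unfold_locales (auto simp: plus_fun_def fun_eq_iff algebra_simps)

lemma fun_vs_span_point_indicator:
  assumes "finite V"
  shows "fun_vs.span (point_indicator ` V) = {f :: 'v \<Rightarrow> real. \<forall>w. w \<notin> V \<longrightarrow> f w = 0}"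
    (is "_ = ?S")
proof
  show "?S \<subseteq> fun_vs.span (point_indicator ` V)"
  proof
    fix f assume "f \<in> ?S"
    then have "f = (\<Sum>x\<in>V. (\<lambda>w. f x * point_indicator x w))"
      using assms by (auto simp: fun_eq_iff sum_fun_apply point_indicator_def if_distrib cong: if_cong)
    also have "\<dots> \<in> fun_vs.span (point_indicator ` V)"
      by (intro fun_vs.span_sum fun_vs.span_scale fun_vs.span_base) auto
    finally show "f \<in> fun_vs.span (point_indicator ` V)" .
  qed
  show "fun_vs.span (point_indicator ` V) \<subseteq> ?S"
    by (rule fun_vs.span_minimal) (auto simp: point_indicator_def intro!: fun_vs.subspaceI)
qed

lemma fun_vs_independent_point_indicator:
  assumes "finite V"
  shows "fun_vs.independent (point_indicator ` V)"
proof (rule fun_vs.independent_if_scalars_zero[OF finite_imageI[OF assms]])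
  fix c d assume sum0: "(\<Sum>x\<in>point_indicator ` V. (\<lambda>w. c x * x w)) = 0" and "d \<in> point_indicator ` V"
  then obtain y where y: "y \<in> V" "d = point_indicator y" by auto
  have inj: "inj_on point_indicator V" by (auto simp: inj_on_def point_indicator_def fun_eq_iff)
  have "0 = (\<Sum>x\<in>V. (\<lambda>w. c (point_indicator x) * point_indicator x w)) y"
    using sum0 sum.reindex[OF inj, of "\<lambda>x w. c x * x w"] by (simp add: comp_def)
  also have "\<dots> = c (point_indicator y)"
    using assms y by (simp add: sum_fun_apply point_indicator_def if_distrib[of "(*) _"] cong: if_cong)
  finally show "c d = 0" using y by simp
qed

lemma linear_inj_on_support_imp_surj:
  fixes T :: "('v \<Rightarrow> real) \<Rightarrow> 'v \<Rightarrow> real" and V :: "'v set"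
  defines "S \<equiv> {f. \<forall>w. w \<notin> V \<longrightarrow> f w = 0}"
  assumes fin: "finite V"
    and add: "\<And>f g. T (f + g) = T f + T g" and scale: "\<And>c f. T (\<lambda>w. c * f w) = (\<lambda>w. c * T f w)"
    and into: "\<And>f. T f \<in> S" and inj: "\<And>f. f \<in> S \<Longrightarrow> T f = 0 \<Longrightarrow> f = 0"
    and "s \<in> S"
  shows "\<exists>f\<in>S. T f = s"
proof -
  interpret h: module_hom "\<lambda>(c::real) (f::'v\<Rightarrow>real) x. c * f x" "\<lambda>(c::real) (f::'v\<Rightarrow>real) x. c * f x" T
    by unfold_locales (use add scale in auto)
  define B where "B = point_indicator ` V"
  have finB: "finite B" and indB: "fun_vs.independent B" and S_span: "S = fun_vs.span B"
    using fin fun_vs_independent_point_indicator fun_vs_span_point_indicator by (auto simp: B_def S_def)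
  have injS: "inj_on T (fun_vs.span B)"
    using inj by (intro h.inj_on_iff_eq_0[THEN iffD2] fun_vs.subspace_span) (auto simp: S_span)
  \<comment> \<open>T maps the basis B to card B independent vectors of span B, so nothing of span B lies outside their span\<close>
  have "s \<in> fun_vs.span (T ` B)"
  proof (rule ccontr)
    assume s: "s \<notin> fun_vs.span (T ` B)"
    have "fun_vs.independent (insert s (T ` B))"
      by (rule fun_vs.independent_insertI[OF s h.independent_injective_image[OF indB injS]])
    moreover have "insert s (T ` B) \<subseteq> fun_vs.span B" using \<open>s \<in> S\<close> into by (auto simp: S_span)
    ultimately have "card (insert s (T ` B)) \<le> card B"
      using fun_vs.independent_span_bound[OF finB] by blast
    moreover have "s \<notin> T ` B" using s fun_vs.span_base by blast
    moreover have "card (T ` B) = card B"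
      using inj_on_subset[OF injS fun_vs.span_superset] by (simp add: card_image)
    ultimately show False using finB by simp
  qed
  then show ?thesis by (auto simp: h.span_image S_span)
qed

end

lemma poisson_solvable:
  fixes V :: "'v set" and s :: "'v \<Rightarrow> real"
  assumes N: "resistor_network V E ends Len" and C: "graph_connected V E ends" and z: "z \<in> V"
    and s0: "(\<Sum>x\<in>V. s x) = 0"
  shows "\<exists>f. f z = 0 \<and> (\<forall>x\<in>V. laplacian E ends Len f x = s x)"
proof -
  have finV: "finite V" using N by (simp add: resistor_network_def)
  \<comment> \<open>the grounding term makes T injective, and it vanishes on solutions because the laplacian sums to 0\<close>
  define T where "T f x = (if x \<in> V then laplacian E ends Len f x + (if x = z then f z else 0) else 0)"
    for f :: "'v \<Rightarrow> real" and x
  have grounded: "f z = 0 \<and> (\<forall>x\<in>V. laplacian E ends Len f x = t x)"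
    if "\<forall>x\<in>V. T f x = t x" "(\<Sum>x\<in>V. t x) = 0" for f t
  proof -
    have "(\<Sum>x\<in>V. laplacian E ends Len f x + (if x = z then f z else 0)) = 0"
      using that by (simp add: T_def)
    then have "f z = 0" using sum_laplacian_eq_0[OF N, of f] z finV by (simp add: sum.distrib)
    with that(1) show ?thesis by (metis (full_types) T_def add.right_neutral)
  qed
  have "\<exists>f\<in>{f. \<forall>w. w \<notin> V \<longrightarrow> f w = 0}. T f = (\<lambda>x. if x \<in> V then s x else 0)"
  proof (rule linear_inj_on_support_imp_surj[OF finV])
    fix f assume f: "f \<in> {f. \<forall>w. w \<notin> V \<longrightarrow> f w = 0}" and "T f = 0"
    then have "f z = 0 \<and> (\<forall>x\<in>V. laplacian E ends Len f x = 0)"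
      using grounded[of f "\<lambda>_. 0"] by (simp add: fun_eq_iff)
    then show "f = 0" using f harmonic_imp_const[OF N C _ _ z, of f] by (auto simp: fun_eq_iff)
  qed (auto simp: T_def plus_fun_def fun_eq_iff laplacian_add laplacian_cmult algebra_simps)
  then obtain f where "T f = (\<lambda>x. if x \<in> V then s x else 0)" by blast
  then show ?thesis using grounded[of f s] s0 by auto
qed

lemma is_voltage_exists:
  assumes "resistor_network V E ends Len" "graph_connected V E ends" "y \<in> V" "z \<in> V"
  shows "\<exists>f. is_voltage V E ends Len z y f"
proof -
  have "(\<Sum>x\<in>V. (if x = y then 1 else 0) - (if x = z then 1 else (0::real))) = 0"
    using assms by (simp add: sum_subtractf resistor_network_def)
  then show ?thesis
    using poisson_solvable[OF assms(1,2,4)] by (auto simp: is_voltage_iff_laplacian)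
qed

lemma jvolt_eqI:
  assumes N: "resistor_network V E ends Len" and C: "graph_connected V E ends" and "z \<in> V" "x \<in> V"
    and f: "is_voltage V E ends Len z y f"
  shows "jvolt V E ends Len z x y = f x"
  unfolding jvolt_def
proof (rule the_equality)
  show "\<exists>g. is_voltage V E ends Len z y g \<and> g x = f x" using f by blast
next
  fix c assume "\<exists>g. is_voltage V E ends Len z y g \<and> g x = c"
  then obtain g where g: "is_voltage V E ends Len z y g" "g x = c" by blast
  have "\<forall>w\<in>V. laplacian E ends Len (\<lambda>w. g w - f w) w = 0"
    using f g by (simp add: laplacian_diff is_voltage_iff_laplacian)
  then have "g x - f x = g z - f z"
    using harmonic_imp_const[OF N C _ assms(4,3), of "\<lambda>w. g w - f w"] by simp
  then show "c = f x" using f g by (simp add: is_voltage_iff_laplacian)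
qed

section \<open>Bridges and contraction\<close>

lemma adj_rtrancl_sym: "(x, y) \<in> (adj E ends)\<^sup>* \<Longrightarrow> (y, x) \<in> (adj E ends)\<^sup>*"
proof (induction rule: rtrancl_induct)
  case (step y z)
  then have "(z, y) \<in> adj E ends" by (auto simp: adj_def)
  then show ?case using step.IH by (rule converse_rtrancl_into_rtrancl)
qed simp

lemma is_bridge_iff:
  assumes C: "graph_connected V E ends" and e: "e \<in> E" "fst (ends e) \<in> V" "snd (ends e) \<in> V"
  shows "is_bridge V E ends e \<longleftrightarrow> (fst (ends e), snd (ends e)) \<notin> (adj (E - {e}) ends)\<^sup>*"
proof
  assume "is_bridge V E ends e"
  show "(fst (ends e), snd (ends e)) \<notin> (adj (E - {e}) ends)\<^sup>*"
  proof
    assume ab: "(fst (ends e), snd (ends e)) \<in> (adj (E - {e}) ends)\<^sup>*"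
    \<comment> \<open>a path around e replaces the edge e itself\<close>
    have "adj E ends \<subseteq> (adj (E - {e}) ends)\<^sup>*"
    proof
      fix xy assume "xy \<in> adj E ends"
      then obtain x y e' where xy: "xy = (x, y)" "e' \<in> E" "ends e' = (x, y) \<or> ends e' = (y, x)"
        by (auto simp: adj_def)
      show "xy \<in> (adj (E - {e}) ends)\<^sup>*"
      proof (cases "e' = e")
        case True
        then show ?thesis using xy ab adj_rtrancl_sym[OF ab] by auto
      next
        case False
        then have "xy \<in> adj (E - {e}) ends" using xy by (auto simp: adj_def)
        then show ?thesis by blast
      qed
    qed
    then have "(adj E ends)\<^sup>* \<subseteq> (adj (E - {e}) ends)\<^sup>*"
      by (simp add: rtrancl_subset_rtrancl)
    then show False
      using C \<open>is_bridge V E ends e\<close> by (auto simp: graph_connected_def is_bridge_def)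
  qed
next
  assume "(fst (ends e), snd (ends e)) \<notin> (adj (E - {e}) ends)\<^sup>*"
  then show "is_bridge V E ends e"
    using e unfolding is_bridge_def graph_connected_def by blast
qed

lemma rtrancl_adj_contract:
  assumes "(x, y) \<in> (adj E ends)\<^sup>*"
  shows "(contr_map ends e x, contr_map ends e y)
           \<in> (adj (E - {e}) (map_prod (contr_map ends e) (contr_map ends e) \<circ> ends))\<^sup>*"
  using assms
proof (induction rule: rtrancl_induct)
  case (step y z)
  let ?m = "contr_map ends e"
  from step(2) obtain e' where e': "e' \<in> E" "ends e' = (y, z) \<or> ends e' = (z, y)"
    by (auto simp: adj_def)
  show ?case
  proof (cases "e' = e")
    case True
    then have "?m y = ?m z" using e'(2) by (cases "ends e") (auto simp: contr_map_def)
    then show ?thesis using step.IH by simp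
  next
    case False
    then have "(?m y, ?m z) \<in> adj (E - {e}) (map_prod ?m ?m \<circ> ends)"
      using e' unfolding adj_def by force
    with step.IH show ?thesis by (rule rtrancl_into_rtrancl)
  qed
qed simp

lemma graph_connected_contract:
  "graph_connected V E ends \<Longrightarrow>
     graph_connected (contr_map ends e ` V) (E - {e}) (map_prod (contr_map ends e) (contr_map ends e) \<circ> ends)"
  by (auto simp: graph_connected_def intro: rtrancl_adj_contract)

lemma contr_map_image:
  "fst (ends e) \<in> V \<Longrightarrow> fst (ends e) \<noteq> snd (ends e) \<Longrightarrow> contr_map ends e ` V = V - {snd (ends e)}"
  by (force simp: contr_map_def)

lemma resistor_network_contract:
  "resistor_network V E ends Len \<Longrightarrow>
     resistor_network (contr_map ends e ` V) (E - {e}) (map_prod (contr_map ends e) (contr_map ends e) \<circ> ends) Len"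
  by (auto simp: resistor_network_def split_beta)

lemma laplacian_contract:
  assumes E: "finite E" "e \<in> E" and ab: "fst (ends e) \<noteq> snd (ends e)"
    and w: "w (fst (ends e)) = w (snd (ends e))" and t: "t \<noteq> snd (ends e)"
  shows "laplacian (E - {e}) (map_prod (contr_map ends e) (contr_map ends e) \<circ> ends) Len w t =
     (if t = fst (ends e)
      then laplacian E ends Len w (fst (ends e)) + laplacian E ends Len w (snd (ends e))
      else laplacian E ends Len w t)"
proof -
  \<comment> \<open>the current through e vanishes, and each current into the merged vertex comes from a or b\<close>
  have del: "laplacian E ends Len w s = laplacian (E - {e}) ends Len w s" for s
    using laplacian_remove_edge[OF E, of ends Len w s] w by (auto simp: edge_current_def)
  have "edge_current (map_prod (contr_map ends e) (contr_map ends e) \<circ> ends) Len w t e' =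
      (if t = fst (ends e)
       then edge_current ends Len w (fst (ends e)) e' + edge_current ends Len w (snd (ends e)) e'
       else edge_current ends Len w t e')" for e'
    using w t ab by (auto simp: edge_current_def contr_map_def split_beta)
  then show ?thesis
    unfolding del by (cases "t = fst (ends e)") (simp_all add: laplacian_def sum.distrib)
qed

section \<open>Potentials of unit currents along the edges\<close>

locale grounded_network =
  fixes V :: "'v set" and E :: "'e set" and ends :: "'e \<Rightarrow> 'v \<times> 'v" and Len :: "'e \<Rightarrow> real"
    and g :: 'v
  assumes network: "resistor_network V E ends Len"
    and connected: "graph_connected V E ends" and ground: "g \<in> V"
begin

abbreviation "lap \<equiv> laplacian E ends Len"

abbreviation "res \<equiv> eff_res V E ends Len"

abbreviation "a e \<equiv> fst (ends e)"

abbreviation "b e \<equiv> snd (ends e)"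

lemma finite_V: "finite V" and finite_E: "finite E"
  using network by (auto simp: resistor_network_def)

lemma ends_in_V: "e \<in> E \<Longrightarrow> a e \<in> V" "e \<in> E \<Longrightarrow> b e \<in> V"
  and Len_pos: "e \<in> E \<Longrightarrow> Len e > 0"
  using network by (auto simp: resistor_network_def)

definition green :: "'v \<Rightarrow> 'v \<Rightarrow> real" where "green x y = jvolt V E ends Len g x y"

lemma is_voltage_green: assumes "y \<in> V" shows "is_voltage V E ends Len g y (\<lambda>x. green x y)"
proof -
  obtain f where f: "is_voltage V E ends Len g y f"
    using is_voltage_exists[OF network connected assms ground] by blast
  have "\<And>x. x \<in> V \<Longrightarrow> green x y = f x"
    using jvolt_eqI[OF network connected ground _ f] by (simp add: green_def)
  with f ground laplacian_cong[OF network, of "\<lambda>x. green x y" f] show ?thesis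
    by (simp add: is_voltage_iff_laplacian)
qed

lemma laplacian_green:
  "y \<in> V \<Longrightarrow> x \<in> V \<Longrightarrow> lap (\<lambda>w. green w y) x = (if x = y then 1 else 0) - (if x = g then 1 else 0)"
  using is_voltage_green by (simp add: is_voltage_iff_laplacian)

lemma green_ground: "y \<in> V \<Longrightarrow> green g y = 0"
  using is_voltage_green by (simp add: is_voltage_iff_laplacian)

lemma green_sym: assumes "x \<in> V" "y \<in> V" shows "green x y = green y x"
proof -
  have "(\<Sum>w\<in>V. green w x * lap (\<lambda>w. green w y) w) = (\<Sum>w\<in>V. green w y * lap (\<lambda>w. green w x) w)"
    unfolding sum_mult_laplacian[OF network] by (simp add: mult.commute)
  with assms ground finite_V show ?thesis
    by (simp add: laplacian_green right_diff_distrib sum_subtractf green_ground)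
qed

lemma jvolt_green:
  assumes "x \<in> V" "y \<in> V" "z \<in> V"
  shows "jvolt V E ends Len z x y = green x y - green x z - green z y + green z z"
proof -
  have "is_voltage V E ends Len z y (\<lambda>w. green w y - green w z + (green z z - green z y))"
    using assms by (simp add: is_voltage_iff_laplacian laplacian_add_const laplacian_diff laplacian_green)
  then show ?thesis using jvolt_eqI[OF network connected assms(3,1)] by simp
qed

lemma eff_res_green: "x \<in> V \<Longrightarrow> y \<in> V \<Longrightarrow> res x y = green x x + green y y - 2 * green x y"
  unfolding eff_res_def using jvolt_green green_sym by simp

lemma eff_res_sym: "x \<in> V \<Longrightarrow> y \<in> V \<Longrightarrow> res x y = res y x"
  using eff_res_green green_sym by simp

lemma eff_res_self: "x \<in> V \<Longrightarrow> res x x = 0"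
  using eff_res_green by simp

definition pot :: "'e \<Rightarrow> 'v \<Rightarrow> real" where
  "pot e w = green w (a e) - green w (b e) - green (b e) (a e) + green (b e) (b e)"

definition rho :: "'e \<Rightarrow> real" where "rho e = pot e (a e)"

lemma jvolt_pot: "e \<in> E \<Longrightarrow> w \<in> V \<Longrightarrow> jvolt V E ends Len (b e) w (a e) = pot e w"
  using jvolt_green ends_in_V by (simp add: pot_def)

lemma pot_b: "pot e (b e) = 0"
  by (simp add: pot_def)

lemma pot_diff:
  "e \<in> E \<Longrightarrow> x \<in> V \<Longrightarrow> y \<in> V \<Longrightarrow>
     pot e x - pot e y = (green (a e) x - green (a e) y) - (green (b e) x - green (b e) y)"
  using ends_in_V green_sym by (simp add: pot_def)

lemma eff_res_diff_ends: "e \<in> E \<Longrightarrow> y \<in> V \<Longrightarrow> res (a e) y - res (b e) y = rho e - 2 * pot e y"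
  using ends_in_V green_sym by (simp add: eff_res_green rho_def pot_def algebra_simps)

lemma laplacian_pot:
  assumes "e \<in> E" "x \<in> V"
  shows "lap (pot e) x = (if x = a e then 1 else 0) - (if x = b e then 1 else 0)"
proof -
  have "pot e = (\<lambda>w. (green w (a e) - green w (b e)) + (green (b e) (b e) - green (b e) (a e)))"
    by (auto simp: pot_def fun_eq_iff)
  then have "lap (pot e) x = lap (\<lambda>w. green w (a e) - green w (b e)) x"
    by (simp only: laplacian_add_const)
  with assms ends_in_V show ?thesis by (simp add: laplacian_diff laplacian_green)
qed

lemma eff_res_eq_energy:
  assumes "x \<in> V" "y \<in> V"
  shows "res x y = (\<Sum>e\<in>E. (pot e x - pot e y)\<^sup>2 / Len e)"
proof -
  let ?f = "\<lambda>w. green w x - green w y"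
  have "res x y = (\<Sum>w\<in>V. ?f w * lap ?f w)"
    using assms finite_V
    by (simp add: laplacian_diff laplacian_green right_diff_distrib sum_subtractf eff_res_green green_sym)
  also have "\<dots> = (\<Sum>e\<in>E. (pot e x - pot e y)\<^sup>2 / Len e)"
    unfolding sum_mult_laplacian[OF network]
    by (rule sum.cong[OF refl]) (simp add: assms pot_diff power2_eq_square)
  finally show ?thesis .
qed

lemma sum_edge_current_green_diag:
  "e \<in> E \<Longrightarrow> (\<Sum>x\<in>V. edge_current ends Len (\<lambda>w. green w x) x e) = rho e / Len e"
  using finite_V ends_in_V Len_pos[of e]
  by (cases "a e = b e") (simp_all add: edge_current_def sum.distrib rho_def pot_def field_simps)

lemma sum_rho_div_Len: "(\<Sum>e\<in>E. rho e / Len e) = real (card V) - 1"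
proof -
  have "(\<Sum>e\<in>E. rho e / Len e) = (\<Sum>x\<in>V. lap (\<lambda>w. green w x) x)"
    unfolding laplacian_def by (subst sum.swap) (simp add: sum_edge_current_green_diag)
  also have "\<dots> = (\<Sum>x\<in>V. 1 - (if x = g then 1 else 0))"
    by (simp add: laplacian_green)
  also have "\<dots> = real (card V) - 1"
    using finite_V ground by (simp add: sum_subtractf)
  finally show ?thesis .
qed

lemma pot_reciprocity:
  assumes "y \<in> V" "p \<in> V"
  shows "(\<Sum>e\<in>E. (pot e y - pot e p) * (pot e y + pot e p - rho e) / Len e) = 0"
proof -
  let ?f = "\<lambda>w. green w y - green w p" and ?h = "\<lambda>w. green y w + green p w - green w w"
  have "(\<Sum>e\<in>E. (pot e y - pot e p) * (pot e y + pot e p - rho e) / Len e) = (\<Sum>w\<in>V. ?h w * lap ?f w)"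
    unfolding sum_mult_laplacian[OF network]
    by (rule sum.cong[OF refl]) (simp add: assms ends_in_V pot_def rho_def green_sym algebra_simps)
  also have "\<dots> = ?h y - ?h p"
    using assms finite_V by (simp add: laplacian_diff laplacian_green right_diff_distrib sum_subtractf)
  also have "\<dots> = 0" using assms by (simp add: green_sym)
  finally show ?thesis .
qed

lemma edge_current_pot:
  "edge_current ends Len (pot e) x e = ((if x = a e then 1 else 0) - (if x = b e then 1 else 0)) * rho e / Len e"
  by (cases "a e = b e") (auto simp: edge_current_def rho_def pot_b)

lemma rho_eq_energy: "e \<in> E \<Longrightarrow> rho e = (\<Sum>e'\<in>E. (pot e (a e') - pot e (b e'))\<^sup>2 / Len e')"
  using sum_mult_laplacian[OF network, of "pot e" "pot e"] finite_V ends_in_V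
  by (simp add: laplacian_pot right_diff_distrib sum_subtractf rho_def pot_b power2_eq_square)

lemma energy_nonneg: "e' \<in> E \<Longrightarrow> (t::real)\<^sup>2 / Len e' \<ge> 0"
  using Len_pos[of e'] by simp

lemma rho_nonneg: "e \<in> E \<Longrightarrow> rho e \<ge> 0"
  by (simp add: rho_eq_energy energy_nonneg sum_nonneg)

lemma pot_edges_const_if_energy_eq_0:
  assumes "F \<subseteq> E" "(\<Sum>e'\<in>F. (pot e (a e') - pot e (b e'))\<^sup>2 / Len e') = 0"
  shows "\<forall>e'\<in>F. pot e (a e') = pot e (b e')"
proof -
  have "\<forall>e'\<in>F. (pot e (a e') - pot e (b e'))\<^sup>2 / Len e' = 0"
    using assms finite_E finite_subset energy_nonneg by (subst (asm) sum_nonneg_eq_0_iff) auto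
  then show ?thesis using assms(1) Len_pos by force
qed

lemma rho_pos: assumes "e \<in> E" "a e \<noteq> b e" shows "rho e > 0"
proof (rule ccontr)
  assume "\<not> rho e > 0"
  then have "rho e = 0" using rho_nonneg[OF assms(1)] by simp
  then have "lap (pot e) (a e) = 0"
    using pot_edges_const_if_energy_eq_0[of E e] rho_eq_energy[OF assms(1)]
    by (intro laplacian_eq_0_if_edges_const) simp
  then show False using laplacian_pot[OF assms(1) ends_in_V(1)[OF assms(1)]] assms(2) by simp
qed

lemma rho_less_Len:
  assumes e: "e \<in> E" and nb: "\<not> is_bridge V E ends e"
  shows "rho e < Len e"
proof -
  let ?rest = "\<Sum>e'\<in>E - {e}. (pot e (a e') - pot e (b e'))\<^sup>2 / Len e'"
  have L: "Len e > 0" using Len_pos[OF e] .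
  have split: "rho e = (rho e)\<^sup>2 / Len e + ?rest"
    using rho_eq_energy[OF e] finite_E e by (simp add: sum.remove rho_def pot_b)
  have "?rest \<ge> 0" by (auto intro!: sum_nonneg energy_nonneg)
  have le: "rho e \<le> Len e"
  proof (rule ccontr)
    assume "\<not> rho e \<le> Len e"
    then have "(rho e)\<^sup>2 / Len e > rho e" using L by (simp add: power2_eq_square field_simps)
    with split \<open>?rest \<ge> 0\<close> show False by linarith
  qed
  \<comment> \<open>if rho e = Len e, pot e is constant across all other edges, which still connect a e to b e\<close>
  have "rho e \<noteq> Len e"
  proof
    assume eq: "rho e = Len e"
    then have "?rest = 0" using split L by (simp add: power2_eq_square)
    then have "\<forall>e'\<in>E - {e}. pot e (a e') = pot e (b e')"
      by (intro pot_edges_const_if_energy_eq_0) auto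
    moreover have "(a e, b e) \<in> (adj (E - {e}) ends)\<^sup>*"
      using nb ends_in_V[OF e] unfolding is_bridge_def graph_connected_def by blast
    ultimately have "pot e (a e) = pot e (b e)" by (rule rtrancl_adj_eq_if_edges_const)
    then show False using eq L by (simp add: rho_def pot_b)
  qed
  with le show ?thesis by simp
qed

end

section \<open>Deleting and contracting an edge\<close>

lemma sum_sum_Diff_singleton:
  assumes "finite V" "b \<in> V"
  shows "(\<Sum>x\<in>V - {b}. \<Sum>y\<in>V - {b}. h x y) =
     (\<Sum>x\<in>V. \<Sum>y\<in>V. h x y) - (\<Sum>x\<in>V. h x b) - (\<Sum>y\<in>V. h b y) + (h b b :: 'a::ab_group_add)"
  using assms by (simp add: sum_diff1 sum_subtractf)

lemma tendsto_ratio_at_top: "(l::real) > 0 \<Longrightarrow> ((\<lambda>R. R / (l + R)) \<longlongrightarrow> 1) at_top"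
proof -
  assume l: "l > 0"
  have "((\<lambda>R. 1 - l * inverse (l + R)) \<longlongrightarrow> 1 - l * 0) at_top"
    by (intro tendsto_intros tendsto_inverse_0_at_top filterlim_tendsto_add_at_top[OF tendsto_const]
              filterlim_ident)
  moreover have "\<forall>\<^sub>F R in at_top. 1 - l * inverse (l + R) = R / (l + R)"
    using eventually_gt_at_top[of 0] by eventually_elim (use l in \<open>simp add: field_simps\<close>)
  ultimately show ?thesis using tendsto_cong by fastforce
qed

lemma Lim_ratio_at_top: "(l::real) > 0 \<Longrightarrow> Lim at_top (\<lambda>R. R / (l + R)) = 1"
  by (rule tendsto_Lim[OF trivial_limit_at_top_linorder tendsto_ratio_at_top])

lemma Lim_square_ratio_at_top: "(l::real) > 0 \<Longrightarrow> Lim at_top (\<lambda>R. l * R\<^sup>2 / (l + R)\<^sup>2) = l"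
  using tendsto_mult[OF tendsto_const tendsto_power[OF tendsto_ratio_at_top, of l 2], of l]
  by (intro tendsto_Lim[OF trivial_limit_at_top_linorder]) (simp add: power_divide)

context grounded_network
begin

lemma bridge_pot:
  assumes e: "e \<in> E" and br: "is_bridge V E ends e" and w: "w \<in> V"
  shows "pot e w = (if (a e, w) \<in> (adj (E - {e}) ends)\<^sup>* then Len e else 0)"
proof -
  let ?C = "(adj (E - {e}) ends)\<^sup>*"
  define k where "k w = (if (a e, w) \<in> ?C then Len e else 0)" for w
  have nab: "(a e, b e) \<notin> ?C" using br is_bridge_iff[OF connected e ends_in_V[OF e]] by simp
  then have ab: "a e \<noteq> b e" by (metis rtrancl.rtrancl_refl)
  have k_const: "\<forall>e'\<in>E - {e}. k (a e') = k (b e')"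
  proof
    fix e' assume "e' \<in> E - {e}"
    then have "(a e', b e') \<in> adj (E - {e}) ends" "(b e', a e') \<in> adj (E - {e}) ends"
      by (auto simp: adj_def)
    then have "(a e, a e') \<in> ?C \<longleftrightarrow> (a e, b e') \<in> ?C" by (meson rtrancl.rtrancl_into_rtrancl)
    then show "k (a e') = k (b e')" by (simp add: k_def)
  qed
  have "is_voltage V E ends Len (b e) (a e) k"
    unfolding is_voltage_iff_laplacian
  proof (intro conjI ballI)
    show "k (b e) = 0" using nab by (simp add: k_def)
    fix x
    have "edge_current ends Len k x e = (if x = a e then 1 else 0) - (if x = b e then 1 else 0)"
      using nab ab Len_pos[OF e] by (simp add: edge_current_def k_def)
    then show "lap k x = (if x = a e then 1 else 0) - (if x = b e then 1 else 0)"
      by (simp add: laplacian_remove_edge[OF finite_E e] laplacian_eq_0_if_edges_const[OF k_const])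
  qed
  then show ?thesis
    using jvolt_eqI[OF network connected ends_in_V(2)[OF e] w] jvolt_pot[OF e w] by (simp add: k_def)
qed

lemma bridge_rho: "e \<in> E \<Longrightarrow> is_bridge V E ends e \<Longrightarrow> rho e = Len e"
  using bridge_pot[of e "a e"] ends_in_V by (simp add: rho_def)

lemma laplacian_delete_pot:
  assumes "e \<in> E" "x \<in> V"
  shows "laplacian (E - {e}) ends Len (pot e) x =
    ((if x = a e then 1 else 0) - (if x = b e then 1 else 0)) * (1 - rho e / Len e)"
proof -
  have "laplacian (E - {e}) ends Len (pot e) x = lap (pot e) x - edge_current ends Len (pot e) x e"
    using laplacian_remove_edge[OF finite_E assms(1), of ends Len "pot e" x] by simp
  then show ?thesis
    by (simp add: laplacian_pot[OF assms] edge_current_pot divide_inverse algebra_simps)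
qed

lemma jvolt_delete_edge:
  assumes e: "e \<in> E" and nb: "\<not> is_bridge V E ends e" and w: "w \<in> V"
  shows "jvolt V (E - {e}) ends Len (b e) w (a e) = Len e / (Len e - rho e) * pot e w"
    and "jvolt V (E - {e}) ends Len (a e) w (b e) = Len e / (Len e - rho e) * (rho e - pot e w)"
proof -
  have N': "resistor_network V (E - {e}) ends Len"
    using network by (auto simp: resistor_network_def)
  have C': "graph_connected V (E - {e}) ends" using nb by (simp add: is_bridge_def)
  define c where "c = Len e / (Len e - rho e)"
  have c: "c * (1 - rho e / Len e) = 1"
    using rho_less_Len[OF e nb] Len_pos[OF e] by (simp add: c_def field_simps)
  have "is_voltage V (E - {e}) ends Len (b e) (a e) (\<lambda>w. c * pot e w)"
    using c by (simp add: is_voltage_iff_laplacian laplacian_cmult laplacian_delete_pot[OF e] pot_b)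
  then show "jvolt V (E - {e}) ends Len (b e) w (a e) = Len e / (Len e - rho e) * pot e w"
    using jvolt_eqI[OF N' C' ends_in_V(2)[OF e] w] by (simp add: c_def)
  have "(\<lambda>w. c * (rho e - pot e w)) = (\<lambda>w. (\<lambda>w. (- c) * pot e w) w + c * rho e)"
    by (simp add: fun_eq_iff algebra_simps)
  then have "laplacian (E - {e}) ends Len (\<lambda>w. c * (rho e - pot e w)) x
      = - c * laplacian (E - {e}) ends Len (pot e) x" for x
    by (simp only: laplacian_add_const laplacian_cmult)
  then have "is_voltage V (E - {e}) ends Len (a e) (b e) (\<lambda>w. c * (rho e - pot e w))"
    using c by (simp add: is_voltage_iff_laplacian laplacian_delete_pot[OF e] rho_def)
  then show "jvolt V (E - {e}) ends Len (a e) w (b e) = Len e / (Len e - rho e) * (rho e - pot e w)"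
    using jvolt_eqI[OF N' C' ends_in_V(1)[OF e] w] by (simp add: c_def)
qed

lemma R_edge_nonbridge:
  "e \<in> E \<Longrightarrow> \<not> is_bridge V E ends e \<Longrightarrow> R_edge V E ends Len e = Len e / (Len e - rho e) * rho e"
  using jvolt_delete_edge(1)[of e "a e"] ends_in_V by (simp add: R_edge_def eff_res_def rho_def)

lemma eff_res_contract:
  assumes e: "e \<in> E" "a e \<noteq> b e" and x: "x \<in> V - {b e}" and y: "y \<in> V - {b e}"
  shows "eff_res (V - {b e}) (E - {e}) (map_prod (contr_map ends e) (contr_map ends e) \<circ> ends) Len x y
       = res x y - (pot e x - pot e y)\<^sup>2 / rho e"
proof -
  let ?ends' = "map_prod (contr_map ends e) (contr_map ends e) \<circ> ends"
  have V': "contr_map ends e ` V = V - {b e}"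
    using contr_map_image[of ends e V] ends_in_V[OF e(1)] e(2) by simp
  have N': "resistor_network (V - {b e}) (E - {e}) ?ends' Len"
    using resistor_network_contract[OF network, of e] unfolding V' .
  have C': "graph_connected (V - {b e}) (E - {e}) ?ends'"
    using graph_connected_contract[OF connected, of e] unfolding V' .
  have \<rho>: "rho e > 0" using rho_pos[OF e] .
  \<comment> \<open>subtracting a multiple of pot e makes the potential of the unit x-y current equal at a e and b e,
    so it descends to the contracted graph\<close>
  define c where "c = (pot e x - pot e y) / rho e"
  define w where "w t = green t x - green t y - c * pot e t + (c * pot e y - green y x + green y y)" for t
  have "w (a e) - w (b e) = (pot e x - pot e y) - c * rho e"
    using x y e pot_diff[of e x y] by (simp add: w_def pot_b rho_def green_sym ends_in_V)
  then have w_ab: "w (a e) = w (b e)" using \<rho> by (simp add: c_def)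
  have lap_w: "lap w s = (if s = x then 1 else 0) - (if s = y then 1 else 0)
                          - c * ((if s = a e then 1 else 0) - (if s = b e then 1 else 0))" if "s \<in> V" for s
  proof -
    have "w = (\<lambda>t. (\<lambda>t. (green t x - green t y) - c * pot e t) t + (c * pot e y - green y x + green y y))"
      by (simp add: w_def fun_eq_iff)
    then show ?thesis
      using that x y e by (simp only: laplacian_add_const laplacian_diff laplacian_cmult)
                          (simp add: laplacian_green laplacian_pot)
  qed
  have "is_voltage (V - {b e}) (E - {e}) ?ends' Len y x w"
    unfolding is_voltage_iff_laplacian
  proof (intro conjI ballI)
    show "w y = 0" by (simp add: w_def)
    fix t assume t: "t \<in> V - {b e}"
    then show "laplacian (E - {e}) ?ends' Len w t = (if t = x then 1 else 0) - (if t = y then 1 else 0)"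
      using laplacian_contract[where w = w and ends = ends and e = e and E = E, OF finite_E e(1) e(2) w_ab] lap_w ends_in_V[OF e(1)] x y e(2) by auto
  qed
  then have "eff_res (V - {b e}) (E - {e}) ?ends' Len x y = w x"
    unfolding eff_res_def using jvolt_eqI[OF N' C' y x] by simp
  also have "\<dots> = res x y - (pot e x - pot e y)\<^sup>2 / rho e"
    using x y \<rho> by (simp add: w_def c_def eff_res_green green_sym power2_eq_square field_simps)
  finally show ?thesis .
qed

lemma Kf_contract_eq:
  assumes "e \<in> E" "a e \<noteq> b e"
  shows "Kf_contract V E ends Len e =
     (1/2) * (\<Sum>x\<in>V - {b e}. \<Sum>y\<in>V - {b e}. res x y - (pot e x - pot e y)\<^sup>2 / rho e)"
  using contr_map_image[of ends e V] ends_in_V[OF assms(1)] assms(2) eff_res_contract[OF assms]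
  by (simp add: Kf_contract_def Kf_def)

lemma rho_mult_Kf_contract:
  assumes e: "e \<in> E"
  shows "2 * rho e * Kf_contract V E ends Len e =
     rho e * ((\<Sum>x\<in>V. \<Sum>y\<in>V. res x y) - 2 * (\<Sum>y\<in>V. res (b e) y))
     - ((\<Sum>x\<in>V. \<Sum>y\<in>V. (pot e x - pot e y)\<^sup>2) - 2 * (\<Sum>y\<in>V. (pot e y)\<^sup>2))"
proof (cases "a e = b e")
  case True
  then have "rho e = 0" "\<And>w. pot e w = 0" by (simp_all add: rho_def pot_def)
  then show ?thesis by simp
next
  case False
  have b: "b e \<in> V" using ends_in_V[OF e] by simp
  have "(\<Sum>x\<in>V. res x (b e)) = (\<Sum>y\<in>V. res (b e) y)"
    using b eff_res_sym by (intro sum.cong) auto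
  then have res: "(\<Sum>x\<in>V - {b e}. \<Sum>y\<in>V - {b e}. res x y) =
      (\<Sum>x\<in>V. \<Sum>y\<in>V. res x y) - 2 * (\<Sum>y\<in>V. res (b e) y)"
    using sum_sum_Diff_singleton[OF finite_V b, of res] eff_res_self[OF b] by simp
  have pot: "(\<Sum>x\<in>V - {b e}. \<Sum>y\<in>V - {b e}. (pot e x - pot e y)\<^sup>2) =
      (\<Sum>x\<in>V. \<Sum>y\<in>V. (pot e x - pot e y)\<^sup>2) - 2 * (\<Sum>y\<in>V. (pot e y)\<^sup>2)"
    using sum_sum_Diff_singleton[OF finite_V b, of "\<lambda>x y. (pot e x - pot e y)\<^sup>2"]
    by (simp add: pot_b power2_eq_square)
  have "(\<Sum>x\<in>V - {b e}. \<Sum>y\<in>V - {b e}. res x y - (pot e x - pot e y)\<^sup>2 / rho e) =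
      (\<Sum>x\<in>V - {b e}. \<Sum>y\<in>V - {b e}. res x y)
      - (\<Sum>x\<in>V - {b e}. \<Sum>y\<in>V - {b e}. (pot e x - pot e y)\<^sup>2) / rho e"
    by (simp add: sum_subtractf sum_divide_distrib)
  then have "2 * rho e * Kf_contract V E ends Len e =
      rho e * (\<Sum>x\<in>V - {b e}. \<Sum>y\<in>V - {b e}. res x y)
      - (\<Sum>x\<in>V - {b e}. \<Sum>y\<in>V - {b e}. (pot e x - pot e y)\<^sup>2)"
    using rho_pos[OF e False] unfolding Kf_contract_eq[OF e False] by (simp add: right_diff_distrib)
  then show ?thesis unfolding res pot .
qed

lemma nonbridge_R_edge_scaling:
  assumes "e \<in> E" "\<not> is_bridge V E ends e"
  shows "Len e / (Len e - rho e) \<noteq> 0"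
    and "Len e + Len e / (Len e - rho e) * rho e = Len e / (Len e - rho e) * Len e"
  using rho_less_Len[OF assms] Len_pos[OF assms(1)] by (auto simp: field_simps)

lemma edge_val_ratio:
  assumes e: "e \<in> E" and p: "p \<in> V"
  shows "edge_val V E ends Len p e (\<lambda>R Ra Rb. R / (Len e + R)) = rho e / Len e"
proof (cases "is_bridge V E ends e")
  case True
  then show ?thesis using bridge_rho[OF e True] Lim_ratio_at_top[OF Len_pos[OF e]] Len_pos[OF e]
    by (simp add: edge_val_def Let_def)
next
  case False
  then show ?thesis using nonbridge_R_edge_scaling[OF e False] Len_pos[OF e]
    by (simp add: edge_val_def R_edge_nonbridge[OF e False])
qed

lemma edge_val_square:
  assumes e: "e \<in> E" and p: "p \<in> V"
  shows "edge_val V E ends Len p e (\<lambda>R Ra Rb. Len e * R\<^sup>2 / (Len e + R)\<^sup>2) = (rho e)\<^sup>2 / Len e"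
proof (cases "is_bridge V E ends e")
  case True
  then show ?thesis using bridge_rho[OF e True] Lim_square_ratio_at_top[OF Len_pos[OF e]] Len_pos[OF e]
    by (simp add: edge_val_def Let_def power2_eq_square)
next
  case False
  then show ?thesis using nonbridge_R_edge_scaling[OF e False] Len_pos[OF e]
    by (simp add: edge_val_def R_edge_nonbridge[OF e False] power2_eq_square)
qed

lemma edge_val_product:
  assumes e: "e \<in> E" and p: "p \<in> V"
  shows "edge_val V E ends Len p e (\<lambda>R Ra Rb. Len e * Ra * Rb / (Len e + R)\<^sup>2)
       = pot e p * (rho e - pot e p) / Len e"
proof (cases "is_bridge V E ends e")
  case True
  have "edge_val V E ends Len p e (\<lambda>R Ra Rb. Len e * Ra * Rb / (Len e + R)\<^sup>2) = Lim at_top (\<lambda>R::real. 0::real)"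
    using True by (cases "(a e, p) \<in> (adj (E - {e}) ends)\<^sup>*") (simp_all add: edge_val_def Let_def)
  also have "\<dots> = 0" by (rule tendsto_Lim[OF trivial_limit_at_top_linorder tendsto_const])
  also have "\<dots> = pot e p * (rho e - pot e p) / Len e"
    using bridge_pot[OF e True p] bridge_rho[OF e True] by simp
  finally show ?thesis .
next
  case False
  then show ?thesis using nonbridge_R_edge_scaling[OF e False] Len_pos[OF e]
    by (simp add: edge_val_def R_edge_nonbridge[OF e False] jvolt_delete_edge[OF e False p]
                  power2_eq_square)
qed

lemma edge_summand_eq:
  assumes e: "e \<in> E"
  shows "2 * (edge_val V E ends Len g e (\<lambda>R Ra Rb. R / (Len e + R)) * Kf_contract V E ends Len e)
      + 2 * real (card V) * edge_val V E ends Len g e (\<lambda>R Ra Rb. Len e * Ra * Rb / (Len e + R)\<^sup>2)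
      - real (card V) * edge_val V E ends Len g e (\<lambda>R Ra Rb. Len e * R\<^sup>2 / (Len e + R)\<^sup>2)
      + (\<Sum>w\<in>V. edge_val V E ends Len g e (\<lambda>R Ra Rb. R / (Len e + R)) * (res (a e) w + res (b e) w))
    = (rho e * (\<Sum>x\<in>V. \<Sum>y\<in>V. res x y) - (\<Sum>x\<in>V. \<Sum>y\<in>V. (pot e x - pot e y)\<^sup>2)
       + 2 * (\<Sum>y\<in>V. (pot e y - pot e g) * (pot e y + pot e g - rho e))) / Len e"
proof -
  define n where "n = real (card V)"
  define U1 where "U1 = (\<Sum>y\<in>V. pot e y)"
  define U2 where "U2 = (\<Sum>y\<in>V. (pot e y)\<^sup>2)"
  define Rb where "Rb = (\<Sum>y\<in>V. res (b e) y)"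
  have "(\<Sum>w\<in>V. res (a e) w + res (b e) w) = (\<Sum>w\<in>V. (rho e - 2 * pot e w) + 2 * res (b e) w)"
    using eff_res_diff_ends[OF e] by (intro sum.cong) (auto simp: algebra_simps)
  then have "(\<Sum>w\<in>V. res (a e) w + res (b e) w) = n * rho e - 2 * U1 + 2 * Rb"
    by (simp add: sum.distrib sum_subtractf sum_distrib_left[symmetric] n_def U1_def Rb_def)
  then have W: "(\<Sum>w\<in>V. rho e / Len e * (res (a e) w + res (b e) w))
      = rho e / Len e * (n * rho e - 2 * U1 + 2 * Rb)"
    by (simp only: sum_distrib_left[symmetric])
  have "(\<Sum>y\<in>V. (pot e y - pot e g) * (pot e y + pot e g - rho e))
      = (\<Sum>y\<in>V. (pot e y)\<^sup>2 - rho e * pot e y - ((pot e g)\<^sup>2 - rho e * pot e g))"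
    by (intro sum.cong) (auto simp: algebra_simps power2_eq_square)
  then have T: "(\<Sum>y\<in>V. (pot e y - pot e g) * (pot e y + pot e g - rho e))
      = U2 - rho e * U1 - n * ((pot e g)\<^sup>2 - rho e * pot e g)"
    by (simp add: sum_subtractf sum_distrib_left[symmetric] n_def U1_def U2_def)
  have K: "2 * (rho e / Len e * Kf_contract V E ends Len e)
      = (rho e * ((\<Sum>x\<in>V. \<Sum>y\<in>V. res x y) - 2 * Rb)
         - ((\<Sum>x\<in>V. \<Sum>y\<in>V. (pot e x - pot e y)\<^sup>2) - 2 * U2)) / Len e"
    using rho_mult_Kf_contract[OF e] by (simp add: Rb_def U2_def)
  show ?thesis
    using Len_pos[OF e]
    unfolding edge_val_ratio[OF e ground] edge_val_product[OF e ground] edge_val_square[OF e ground]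
      W T K n_def[symmetric]
    by (simp add: field_simps power2_eq_square)
qed

lemma sum_edge_summands:
  "(\<Sum>e\<in>E. (rho e * (\<Sum>x\<in>V. \<Sum>y\<in>V. res x y) - (\<Sum>x\<in>V. \<Sum>y\<in>V. (pot e x - pot e y)\<^sup>2)
       + 2 * (\<Sum>y\<in>V. (pot e y - pot e g) * (pot e y + pot e g - rho e))) / Len e)
   = (real (card V) - 2) * (\<Sum>x\<in>V. \<Sum>y\<in>V. res x y)"
proof -
  have foster: "(\<Sum>e\<in>E. rho e * (\<Sum>x\<in>V. \<Sum>y\<in>V. res x y) / Len e)
      = (real (card V) - 1) * (\<Sum>x\<in>V. \<Sum>y\<in>V. res x y)"
  proof -
    have "(\<Sum>e\<in>E. rho e * (\<Sum>x\<in>V. \<Sum>y\<in>V. res x y) / Len e)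
        = (\<Sum>e\<in>E. rho e / Len e) * (\<Sum>x\<in>V. \<Sum>y\<in>V. res x y)"
      by (simp add: sum_distrib_right)
    then show ?thesis by (simp only: sum_rho_div_Len)
  qed
  have "(\<Sum>e\<in>E. (\<Sum>x\<in>V. \<Sum>y\<in>V. (pot e x - pot e y)\<^sup>2) / Len e)
      = (\<Sum>e\<in>E. \<Sum>x\<in>V. \<Sum>y\<in>V. (pot e x - pot e y)\<^sup>2 / Len e)"
    by (simp add: sum_divide_distrib)
  also have "\<dots> = (\<Sum>x\<in>V. \<Sum>e\<in>E. \<Sum>y\<in>V. (pot e x - pot e y)\<^sup>2 / Len e)"
    by (rule sum.swap)
  also have "\<dots> = (\<Sum>x\<in>V. \<Sum>y\<in>V. \<Sum>e\<in>E. (pot e x - pot e y)\<^sup>2 / Len e)"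
    by (rule sum.cong[OF refl], rule sum.swap)
  also have "\<dots> = (\<Sum>x\<in>V. \<Sum>y\<in>V. res x y)"
    by (simp add: eff_res_eq_energy)
  finally have thomson: "(\<Sum>e\<in>E. (\<Sum>x\<in>V. \<Sum>y\<in>V. (pot e x - pot e y)\<^sup>2) / Len e)
      = (\<Sum>x\<in>V. \<Sum>y\<in>V. res x y)" .
  have "(\<Sum>e\<in>E. 2 * (\<Sum>y\<in>V. (pot e y - pot e g) * (pot e y + pot e g - rho e)) / Len e)
      = 2 * (\<Sum>e\<in>E. \<Sum>y\<in>V. (pot e y - pot e g) * (pot e y + pot e g - rho e) / Len e)"
    by (simp add: sum_divide_distrib sum_distrib_left)
  also have "\<dots> = 2 * (\<Sum>y\<in>V. \<Sum>e\<in>E. (pot e y - pot e g) * (pot e y + pot e g - rho e) / Len e)"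
    by (subst sum.swap) (rule refl)
  also have "\<dots> = 0" by (simp add: pot_reciprocity ground)
  finally have reciprocity:
    "(\<Sum>e\<in>E. 2 * (\<Sum>y\<in>V. (pot e y - pot e g) * (pot e y + pot e g - rho e)) / Len e) = 0" .
  show ?thesis
    unfolding add_divide_distrib diff_divide_distrib sum.distrib sum_subtractf foster thomson reciprocity
    by (simp add: algebra_simps)
qed

end

theorem lemma3p2:
  fixes V :: "'v set" and E :: "'e set" and ends :: "'e \<Rightarrow> 'v \<times> 'v"
    and Len :: "'e \<Rightarrow> real" and p :: 'v
  assumes "metrized_graph V E ends Len" and "p \<in> V"
  shows "2 * (real (card V) - 2) * Kf V E ends Len =
      2 * (\<Sum>e\<in>E. edge_val V E ends Len p e (\<lambda>R Ra Rb. R / (Len e + R))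
                  * Kf_contract V E ends Len e)
    + 2 * real (card V) * (\<Sum>e\<in>E. edge_val V E ends Len p e
                  (\<lambda>R Ra Rb. Len e * Ra * Rb / (Len e + R)\<^sup>2))
    - real (card V) * (\<Sum>e\<in>E. edge_val V E ends Len p e
                  (\<lambda>R Ra Rb. Len e * R\<^sup>2 / (Len e + R)\<^sup>2))
    + (\<Sum>w\<in>V. \<Sum>e\<in>E. edge_val V E ends Len p e (\<lambda>R Ra Rb. R / (Len e + R))
                  * (eff_res V E ends Len (fst (ends e)) w + eff_res V E ends Len (snd (ends e)) w))"
  (is "_ = ?rhs")
proof -
  interpret grounded_network V E ends Len p
    using assms by unfold_locales (auto simp: metrized_graph_def resistor_network_def)
  have "?rhs = (\<Sum>e\<in>E.
      2 * (edge_val V E ends Len p e (\<lambda>R Ra Rb. R / (Len e + R)) * Kf_contract V E ends Len e)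
      + 2 * real (card V) * edge_val V E ends Len p e (\<lambda>R Ra Rb. Len e * Ra * Rb / (Len e + R)\<^sup>2)
      - real (card V) * edge_val V E ends Len p e (\<lambda>R Ra Rb. Len e * R\<^sup>2 / (Len e + R)\<^sup>2)
      + (\<Sum>w\<in>V. edge_val V E ends Len p e (\<lambda>R Ra Rb. R / (Len e + R)) * (res (a e) w + res (b e) w)))"
    by (simp add: sum.distrib sum_subtractf sum_distrib_left sum.swap[of _ V])
  also have "\<dots> = (real (card V) - 2) * (\<Sum>x\<in>V. \<Sum>y\<in>V. res x y)"
    by (simp add: edge_summand_eq sum_edge_summands)
  finally show ?thesis by (simp add: Kf_def)
qed

end
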